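(* Let $\Omega>0$ denote the maximum absolute value of the stored quantities, let $C$ be the column index of a scalar (stored in $X[1,C]$) in $X\in\mathbb{R}^{K\times d}$, and let $D$ be the column index of a column. Then there exists a single transformer layer that simulates the repeat-addition operation $X[:,D]\leftarrow\mathbf 1_K\cdot X[1,C]+X[:,D]$.
   Context: Conventions: rows/columns indexed from $1$; $X[i,j]$ is the $(i,j)$ entry, $X[:,j]$ the $j$-th column; $\mathbf 1_K$ is the all-ones vector of length $K$. $\phi(x)=\max\{x,0\}$ entrywise. Hardmax $\sigma$: row $i$ of $\sigma(\Phi)$ is $\frac{1}{|S_i|}\sum_{k\in S_i}e_k$, $S_i=\{k:\Phi_{ik}=\max_j\Phi_{ij}\}$. Positional encoding: $\widehat\delta>0$ the nearest representable approximation of the minimum increment angle, $R_{\widehat\delta}=\begin{bmatrix}\cos\widehat\delta&-\sin\widehat\delta\\ \sin\widehat\delta&\cos\widehat\delta\end{bmatrix}$, $p_0=(0,1)^\top$, $p_i=R_{\widehat\delta}^\top p_{i-1}$. For a weighted hypergraph with incident matrix $A\in\mathbb{R}^{n_v\times n_e}$ ($A_{ij}=w(e_j)$ if vertex $v_i\in e_j$, else $0$) and $K\ge\max\{n_v,n_e\}+1$, the padded incident matrix $\widetilde A\in\mathbb{R}^{K\times K}$ has $\widetilde A_{i+1,j+1}=A_{ij}$, zeros elsewhere. A transformer layer on $X\in\mathbb{R}^{K\times d}$ is $f(X,\widetilde A)=f_{\mathrm{mlp}}(f_{\mathrm{attn}}(X,\widetilde A))$, $f_{\mathrm{attn}}(X,\widetilde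 A)=\sum_{i\in M_A}\psi^{(i)}(X,\widetilde A)+\sum_{i\in M_{A^\top}}\psi^{(i)}(X,\widetilde A^\top)+\sum_{i\in M}\psi^{(i)}(X,I_K)+X$, $\psi(X,B)=B\,\sigma(XW_QW_K^\top X^\top)XW_V$ ($W_Q,W_K\in\mathbb{R}^{d\times2}$, $W_V\in\mathbb{R}^{d\times d}$), $f_{\mathrm{mlp}}(X)=Z^{(4)}W^{(4)}+X$, $Z^{(1)}=X$, $Z^{(j+1)}=\phi(Z^{(j)}W^{(j)})$ ($j=1,2,3$). Storage convention: scalars in the top row of a column (rest $0$), arrays of length $K-1$ in rows $2,\dots,K$ (top $0$); designated columns $B_{\mathrm{global}}$ (top $1$, rest $0$), $B_{\mathrm{local}}$ (top $0$, rest $1$), positional columns $P_1,P_2$ (array position $i$ holds $p_i^{(1)},p_i^{(2)}$), and scratchpad columns. "Simulating an operation" means the layer's weights can be chosen so that applying it to $X$ performs the stated update. *)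

theory Defs
  imports Main "HOL.Real"
begin

text \<open>Matrices are functions nat => nat => real, indexed from 1; dimensions are
carried explicitly; only entries inside the stated index ranges are meaningful.\<close>

type_synonym mat = "nat \<Rightarrow> nat \<Rightarrow> real"

definition mmul :: "nat \<Rightarrow> mat \<Rightarrow> mat \<Rightarrow> mat" where
  "mmul n A B = (\<lambda>i j. \<Sum>k=1..n. A i k * B k j)"

definition mtrans :: "mat \<Rightarrow> mat" where
  "mtrans A = (\<lambda>i j. A j i)"

definition madd :: "mat \<Rightarrow> mat \<Rightarrow> mat" where
  "madd A B = (\<lambda>i j. A i j + B i j)"

definition relu :: "mat \<Rightarrow> mat" where
  "relu A = (\<lambda>i j. max (A i j) 0)"

definition hardmax :: "nat \<Rightarrow> mat \<Rightarrow> mat" where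
  "hardmax K \<Phi> = (\<lambda>i k.
     let S = {j \<in> {1..K}. \<Phi> i j = Max ((\<Phi> i) ` {1..K})}
     in if k \<in> S then 1 / real (card S) else 0)"

text \<open>Attention head psi(X,B) = B sigma(X WQ WK^T X^T) X WV, X of size K x d,
WQ, WK of size d x 2, WV of size d x d.\<close>
definition psi :: "nat \<Rightarrow> nat \<Rightarrow> (mat \<times> mat \<times> mat) \<Rightarrow> mat \<Rightarrow> mat \<Rightarrow> mat" where
  "psi K d W X B =
     (case W of (WQ, WK, WV) \<Rightarrow>
        mmul K B
          (mmul d (mmul K (hardmax K (mmul 2 (mmul 2 (mmul d X WQ) (mtrans WK)) (mtrans X))) X) WV))"

text \<open>Note mmul 2 (mmul d X WQ) (mtrans WK) is the K x d matrix X WQ WK^T,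
then multiplied by X^T with inner dimension d.\<close>

definition f_attn :: "nat \<Rightarrow> nat \<Rightarrow> (mat \<times> mat \<times> mat) list \<Rightarrow> (mat \<times> mat \<times> mat) list
    \<Rightarrow> (mat \<times> mat \<times> mat) list \<Rightarrow> mat \<Rightarrow> mat \<Rightarrow> mat" where
  "f_attn K d HA HAT HI X At =
     (\<lambda>i j. (\<Sum>h\<leftarrow>HA. psi K d h X At i j) + (\<Sum>h\<leftarrow>HAT. psi K d h X (mtrans At) i j)
          + (\<Sum>h\<leftarrow>HI. psi K d h X (\<lambda>a b. if a = b then 1 else 0) i j) + X i j)"

definition f_mlp :: "nat \<Rightarrow> nat \<Rightarrow> nat \<Rightarrow> nat \<Rightarrow> mat \<Rightarrow> mat \<Rightarrow> mat \<Rightarrow> mat \<Rightarrow> mat \<Rightarrow> mat" where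
  "f_mlp d h1 h2 h3 W1 W2 W3 W4 X =
     (let Z2 = relu (mmul d X W1); Z3 = relu (mmul h1 Z2 W2); Z4 = relu (mmul h2 Z3 W3)
      in madd (mmul h3 Z4 W4) X)"

definition tf_layer :: "nat \<Rightarrow> nat \<Rightarrow> (mat \<times> mat \<times> mat) list \<Rightarrow> (mat \<times> mat \<times> mat) list
    \<Rightarrow> (mat \<times> mat \<times> mat) list \<Rightarrow> nat \<Rightarrow> nat \<Rightarrow> nat \<Rightarrow> mat \<Rightarrow> mat \<Rightarrow> mat \<Rightarrow> mat
    \<Rightarrow> mat \<Rightarrow> mat \<Rightarrow> mat" where
  "tf_layer K d HA HAT HI h1 h2 h3 W1 W2 W3 W4 X At =
     f_mlp d h1 h2 h3 W1 W2 W3 W4 (f_attn K d HA HAT HI X At)"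

text \<open>Padded incident matrix of a weighted hypergraph with vertices 1..nv, edges 1..ne,
membership relation mem v e and edge weights w e: entry (i+1,j+1) is A(i,j).\<close>
definition padded_incident :: "nat \<Rightarrow> nat \<Rightarrow> (nat \<Rightarrow> nat \<Rightarrow> bool) \<Rightarrow> (nat \<Rightarrow> real) \<Rightarrow> mat" where
  "padded_incident nv ne mem w = (\<lambda>i j.
     if 2 \<le> i \<and> i \<le> nv + 1 \<and> 2 \<le> j \<and> j \<le> ne + 1 \<and> mem (i - 1) (j - 1)
     then w (j - 1) else 0)"

end

theory Submission
  imports Defs
begin

text \<open>With zero key weights all attention scores vanish, so hardmax averages uniformly over
the K rows. Since column C is zero below the top row, this average is X[1,C]/K in every row;
the value matrix K e_C e_D^T moves it into column D, the residual connection
adds X, and an MLP whose last weight matrix is zero is the identity.\<close>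

definition mat_unit :: "nat \<Rightarrow> nat \<Rightarrow> real \<Rightarrow> mat" where
  "mat_unit C D r = (\<lambda>a b. if a = C \<and> b = D then r else 0)"

lemma mmul_zero_left [simp]: "mmul n (\<lambda>_ _. 0) A = (\<lambda>_ _. 0)"
  unfolding mmul_def by simp

lemma mmul_zero_right [simp]: "mmul n A (\<lambda>_ _. 0) = (\<lambda>_ _. 0)"
  unfolding mmul_def by simp

lemma mtrans_zero [simp]: "mtrans (\<lambda>_ _. 0) = (\<lambda>_ _. 0)"
  unfolding mtrans_def by simp

lemma mmul_identity_left:
  assumes "i \<in> {1..K}"
  shows "mmul K (\<lambda>a b. if a = b then 1 else 0) M i j = M i j"
  using assms unfolding mmul_def
  by (simp add: if_distrib[where f="\<lambda>x. x * _"] sum.delta cong: if_cong)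

lemma mmul_mat_unit_right:
  assumes "C \<in> {1..d}"
  shows "mmul d M (mat_unit C D r) i j = (if j = D then M i C * r else 0)"
  using assms unfolding mmul_def mat_unit_def
  by (auto simp: if_distrib[where f="\<lambda>x. _ * x"] sum.delta cong: if_cong)

lemma hardmax_const_row:
  assumes "\<And>j. j \<in> {1..K} \<Longrightarrow> \<Phi> i j = c"
  shows "hardmax K \<Phi> i k = (if k \<in> {1..K} then 1 / real K else 0)"
proof (cases "K = 0")
  case False
  then have "(\<Phi> i) ` {1..K} = {c}"
    using assms by force
  then have "Max ((\<Phi> i) ` {1..K}) = c"
    by simp
  then have "{j \<in> {1..K}. \<Phi> i j = Max ((\<Phi> i) ` {1..K})} = {1..K}"
    using assms by blast
  then show ?thesis
    unfolding hardmax_def Let_def by simp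
qed (simp add: hardmax_def)

lemma mmul_uniform_hardmax:
  "mmul K (hardmax K (\<lambda>_ _. 0)) X i j = (\<Sum>k=1..K. X k j) / real K"
  unfolding mmul_def by (simp add: hardmax_const_row sum_divide_distrib)

lemma sum_supported_at_one:
  fixes x :: "nat \<Rightarrow> 'a::comm_monoid_add"
  assumes "K \<ge> 1" "\<forall>k\<in>{2..K}. x k = 0"
  shows "(\<Sum>k=1..K. x k) = x 1"
proof -
  have "(\<Sum>k=1..K. x k) = (\<Sum>k\<in>{1}. x k)"
    by (rule sum.mono_neutral_right) (use assms in auto)
  then show ?thesis by simp
qed

lemma psi_zero_key:
  "psi K d (WQ, \<lambda>_ _. 0, WV) X B = mmul K B (mmul d (mmul K (hardmax K (\<lambda>_ _. 0)) X) WV)"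
  unfolding psi_def by simp

lemma f_mlp_zero_output: "f_mlp d h1 h2 h3 W1 W2 W3 (\<lambda>_ _. 0) Y = Y"
  unfolding f_mlp_def Let_def madd_def by simp

lemma psi_broadcast_top_entry:
  assumes "K \<ge> 1" "i \<in> {1..K}" "C \<in> {1..d}" "\<forall>k\<in>{2..K}. X k C = 0"
  shows "psi K d (WQ, \<lambda>_ _. 0, mat_unit C D (real K)) X (\<lambda>a b. if a = b then 1 else 0) i j
    = (if j = D then X 1 C else 0)"
proof -
  have "mmul K (hardmax K (\<lambda>_ _. 0)) X i C = X 1 C / real K"
    using sum_supported_at_one[of K "\<lambda>k. X k C"] assms(1,4) by (simp add: mmul_uniform_hardmax)
  then have "mmul d (mmul K (hardmax K (\<lambda>_ _. 0)) X) (mat_unit C D (real K)) i j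
      = (if j = D then X 1 C else 0)"
    using assms(1,3) by (simp add: mmul_mat_unit_right)
  then show ?thesis
    using assms(2) by (simp only: psi_zero_key mmul_identity_left)
qed

theorem lemmaC10:
  fixes K d Bg Bl C D :: nat and \<Omega> :: real
  assumes "\<Omega> > 0" and "K \<ge> 1"
    and "Bg \<in> {1..d}" and "Bl \<in> {1..d}" and "Bg \<noteq> Bl"
    and "C \<in> {1..d}" and "D \<in> {1..d}"
  shows "\<exists>HA HAT HI h1 h2 h3 W1 W2 W3 W4.
     \<forall>(X::mat) nv ne mem w.
       K \<ge> max nv ne + 1
       \<longrightarrow> (\<forall>i\<in>{1..K}. \<forall>j\<in>{1..d}. \<bar>X i j\<bar> \<le> \<Omega>)
       \<longrightarrow> X 1 Bg = 1 \<longrightarrow> (\<forall>i\<in>{2..K}. X i Bg = 0)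
       \<longrightarrow> X 1 Bl = 0 \<longrightarrow> (\<forall>i\<in>{2..K}. X i Bl = 1)
       \<longrightarrow> (\<forall>i\<in>{2..K}. X i C = 0)
       \<longrightarrow> (\<forall>i\<in>{1..K}. \<forall>j\<in>{1..d}.
             tf_layer K d HA HAT HI h1 h2 h3 W1 W2 W3 W4 X (padded_incident nv ne mem w) i j
             = (if j = D then X 1 C + X i D else X i j))"
proof -
  let ?Z = "\<lambda>_ _. 0 :: real"
  let ?head = "(?Z, ?Z, mat_unit C D (real K))"
  have layer: "tf_layer K d [] [] [?head] 0 0 0 ?Z ?Z ?Z ?Z X At i j
      = (if j = D then X 1 C + X i D else X i j)"
    if "\<forall>k\<in>{2..K}. X k C = 0" "i \<in> {1..K}" for X At i j
  proof -
    have "psi K d ?head X (\<lambda>a b. if a = b then 1 else 0) i j = (if j = D then X 1 C else 0)"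
      using psi_broadcast_top_entry[where X=X, OF assms(2) that(2) assms(6) that(1)] .
    then show ?thesis
      unfolding tf_layer_def f_mlp_zero_output f_attn_def by simp
  qed
  show ?thesis
    by (intro exI allI impI ballI, rule layer)
qed

end
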